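(* Let $\rho$ be a finite intensity on $\Omega=B^d_+\times B^d_+$ with total mass $\Lambda>0$ such that $\mu=\rho/\Lambda$ is absolutely continuous with respect to Lebesgue measure on $\mathbb{R}^{2d}$ and neither the green nor the red marginal of $\mu$ is supported on a proper linear subspace of $\mathbb{R}^d$. Let $\phi:([0,1],\mathrm{Leb})\to(\Omega,\mu)$ be a measure-preserving Borel isomorphism (a bijection modulo null sets), and let $W(u,v)=K(\phi(u),\phi(v))$. Then $W$ is almost twin-free.
   Context: $B^d_+=\{x\in\mathbb{R}^d:x_k\ge0\ \forall k,\ \|x\|\le1\}$, $\Omega=B^d_+\times B^d_+$; $s=(\vec g_s,\vec r_s)\in\Omega$ and $K(s,t)=\vec g_s\cdot\vec r_t$. Green/red marginals are pushforwards of $\mu$ under $s\mapsto\vec g_s$, $s\mapsto\vec r_s$. For a kernel $W:[0,1]^2\to[0,1]$, two labels $u\neq u'$ are twins if $W(u,t)=W(u',t)$ for a.e. $t$ and $W(t,u)=W(t,u')$ for a.e. $t$. $W$ is almost twin-free if there is a Lebesgue-null set $N\subset[0,1]$ such that no two distinct $u,u'\in[0,1]\setminus N$ are twins. *)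

theory Defs
  imports "HOL-Analysis.Analysis"
begin

definition Bplus :: "(real ^ 'd) set" where
  "Bplus = {x. (\<forall>k. 0 \<le> x $ k) \<and> norm x \<le> 1}"

text \<open>Omega = B^d_+ x B^d_+; a point s is the pair (green vector, red vector).\<close>
definition Omega :: "((real ^ 'd) \<times> (real ^ 'd)) set" where
  "Omega = Bplus \<times> Bplus"

definition Kern :: "(real ^ 'd) \<times> (real ^ 'd) \<Rightarrow> (real ^ 'd) \<times> (real ^ 'd) \<Rightarrow> real" where
  "Kern s t = inner (fst s) (snd t)"

definition green_marginal :: "((real ^ 'd) \<times> (real ^ 'd)) measure \<Rightarrow> (real ^ 'd) measure" where
  "green_marginal M = distr M borel fst"

definition red_marginal :: "((real ^ 'd) \<times> (real ^ 'd)) measure \<Rightarrow> (real ^ 'd) measure" where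
  "red_marginal M = distr M borel snd"

definition supported_on :: "'a measure \<Rightarrow> 'a set \<Rightarrow> bool" where
  "supported_on M V \<longleftrightarrow> emeasure M (space M - V) = 0"

definition Leb01 :: "real measure" where
  "Leb01 = restrict_space lborel {0..1}"

definition mp_borel_iso :: "(real \<Rightarrow> 'b) \<Rightarrow> 'b set \<Rightarrow> 'b measure \<Rightarrow> bool" where
  "mp_borel_iso \<phi> Om M \<longleftrightarrow>
     \<phi> \<in> measurable Leb01 M \<and> distr Leb01 M \<phi> = M \<and> \<phi> ` {0..1} \<subseteq> Om \<and>
     (\<exists>N N' \<psi>. N \<in> null_sets Leb01 \<and> N' \<in> null_sets M \<and>
        bij_betw \<phi> ({0..1} - N) (Om - N') \<and>
        \<psi> \<in> measurable M lborel \<and>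
        (\<forall>x \<in> {0..1} - N. \<psi> (\<phi> x) = x) \<and> (\<forall>y \<in> Om - N'. \<phi> (\<psi> y) = y))"

definition twins :: "(real \<Rightarrow> real \<Rightarrow> real) \<Rightarrow> real \<Rightarrow> real \<Rightarrow> bool" where
  "twins W u u' \<longleftrightarrow> u \<noteq> u' \<and>
     (AE t in lebesgue. t \<in> {0..1} \<longrightarrow> W u t = W u' t) \<and>
     (AE t in lebesgue. t \<in> {0..1} \<longrightarrow> W t u = W t u')"

definition almost_twin_free :: "(real \<Rightarrow> real \<Rightarrow> real) \<Rightarrow> bool" where
  "almost_twin_free W \<longleftrightarrow>
     (\<exists>N. N \<subseteq> {0..1} \<and> N \<in> null_sets lebesgue \<and>
        (\<forall>u \<in> {0..1} - N. \<forall>u' \<in> {0..1} - N. u \<noteq> u' \<longrightarrow> \<not> twins W u u'))"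

end

theory Submission
  imports Defs
begin

text \<open>If \<open>u\<close> and \<open>u'\<close> are twins, then \<open>(g\<^sub>u - g\<^sub>u') \<bullet> r(\<phi> t) = 0\<close> for almost every \<open>t\<close>.
  Since \<open>\<phi>\<close> pushes Lebesgue measure forward to \<open>\<mu>\<close>, the red marginal is then carried by the
  hyperplane orthogonal to \<open>g\<^sub>u - g\<^sub>u'\<close>, which non-degeneracy forbids unless \<open>g\<^sub>u = g\<^sub>u'\<close>.
  Symmetrically \<open>r\<^sub>u = r\<^sub>u'\<close>, so twins have the same image under \<open>\<phi>\<close>, which is injective
  off a null set.\<close>

lemma AE_Leb01_pushforward:
  assumes meas: "\<phi> \<in> measurable Leb01 M"
    and pushforward: "distr Leb01 M \<phi> = M"
    and P: "{s \<in> space M. P s} \<in> sets M"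
    and ae: "AE t in lebesgue. t \<in> {0..1} \<longrightarrow> P (\<phi> t)"
  shows "AE s in M. P s"
proof -
  have "AE t in lborel. t \<in> {0..1} \<longrightarrow> P (\<phi> t)"
    using ae by (simp only: AE_completion_iff)
  then have "AE t in Leb01. P (\<phi> t)"
    unfolding Leb01_def by (simp add: AE_restrict_space_iff)
  then have "AE s in distr Leb01 M \<phi>. P s"
    by (simp only: AE_distr_iff[OF meas P])
  then show ?thesis
    using pushforward by (simp only:)
qed

lemma supported_on_distrI:
  assumes p: "p \<in> measurable M borel"
    and V: "V \<in> sets borel"
    and ae: "AE s in M. p s \<in> V"
  shows "supported_on (distr M borel p) V"
proof -
  have "AE x in distr M borel p. x \<in> V"
    using ae V by (simp add: AE_distr_iff[OF p])
  moreover have "space (distr M borel p) - V \<in> sets (distr M borel p)"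
    using V by simp
  ultimately show ?thesis
    unfolding supported_on_def by (simp add: AE_iff_measurable[OF _ refl] set_diff_eq)
qed

lemma orthogonal_AE_eq_0:
  fixes p :: "'a \<Rightarrow> 'b::euclidean_space"
  assumes p: "p \<in> measurable M borel"
    and nondegenerate: "\<And>V. subspace V \<Longrightarrow> V \<noteq> UNIV \<Longrightarrow> \<not> supported_on (distr M borel p) V"
    and ae: "AE s in M. c \<bullet> p s = 0"
  shows "c = 0"
proof (rule ccontr)
  assume "c \<noteq> 0"
  have "supported_on (distr M borel p) {x. c \<bullet> x = 0}"
    using ae by (intro supported_on_distrI[OF p] borel_closed closed_hyperplane) simp
  moreover have "{x. c \<bullet> x = 0} \<noteq> UNIV"
    using \<open>c \<noteq> 0\<close> by (simp add: hyperplane_eq_UNIV)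
  ultimately show False
    using nondegenerate subspace_hyperplane by blast
qed

lemma twins_Kern_imp_eq:
  fixes M :: "((real ^ 'd) \<times> (real ^ 'd)) measure"
  assumes sets_M: "sets M = sets borel"
    and meas: "\<phi> \<in> measurable Leb01 M"
    and pushforward: "distr Leb01 M \<phi> = M"
    and green: "\<And>V. subspace V \<Longrightarrow> V \<noteq> UNIV \<Longrightarrow> \<not> supported_on (green_marginal M) V"
    and red: "\<And>V. subspace V \<Longrightarrow> V \<noteq> UNIV \<Longrightarrow> \<not> supported_on (red_marginal M) V"
    and twins: "twins (\<lambda>u v. Kern (\<phi> u) (\<phi> v)) u u'"
  shows "\<phi> u = \<phi> u'"
proof -
  define c where "c = fst (\<phi> u) - fst (\<phi> u')"
  define e where "e = snd (\<phi> u) - snd (\<phi> u')"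
  have borel_M: "borel_measurable M = borel_measurable borel"
    using sets_M by (rule measurable_cong_sets) simp
  have fst_M: "fst \<in> borel_measurable M" and snd_M: "snd \<in> borel_measurable M"
    unfolding borel_M by (intro borel_measurable_continuous_onI continuous_intros)+
  have space_M: "space M = UNIV"
    using sets_eq_imp_space_eq[OF sets_M] by simp
  have "AE t in lebesgue. t \<in> {0..1} \<longrightarrow> c \<bullet> snd (\<phi> t) = 0"
    using twins unfolding twins_def
    by (auto elim!: eventually_mono simp: Kern_def c_def inner_diff_left)
  then have "AE s in M. c \<bullet> snd s = 0"
    by (intro AE_Leb01_pushforward[OF meas pushforward])
      (simp_all add: space_M sets_M borel_closed closed_Collect_eq continuous_intros)
  then have "c = 0"
    using red unfolding red_marginal_def by (intro orthogonal_AE_eq_0[OF snd_M])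
  have "AE t in lebesgue. t \<in> {0..1} \<longrightarrow> e \<bullet> fst (\<phi> t) = 0"
    using twins unfolding twins_def
    by (auto elim!: eventually_mono simp: Kern_def e_def inner_diff_right inner_commute)
  then have "AE s in M. e \<bullet> fst s = 0"
    by (intro AE_Leb01_pushforward[OF meas pushforward])
      (simp_all add: space_M sets_M borel_closed closed_Collect_eq continuous_intros)
  then have "e = 0"
    using green unfolding green_marginal_def by (intro orthogonal_AE_eq_0[OF fst_M])
  show ?thesis
    using \<open>c = 0\<close> \<open>e = 0\<close> by (simp add: c_def e_def prod_eq_iff)
qed

lemma almost_twin_free_if_inj_on:
  assumes N: "N \<in> null_sets Leb01"
    and inj: "inj_on \<phi> ({0..1} - N)"
    and twins_eq: "\<And>u u'. twins W u u' \<Longrightarrow> \<phi> u = \<phi> u'"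
  shows "almost_twin_free W"
proof -
  have "N \<subseteq> {0..1}" and "N \<in> null_sets lborel"
    using N unfolding Leb01_def by (simp_all add: null_sets_restrict_space)
  then show ?thesis
    unfolding almost_twin_free_def
    using inj twins_eq by (intro exI[of _ N]) (auto simp: null_sets_completionI inj_on_def)
qed

theorem mainTheorem8:
  fixes \<rho> :: "((real ^ 'd) \<times> (real ^ 'd)) measure"
    and \<phi> :: "real \<Rightarrow> (real ^ 'd) \<times> (real ^ 'd)"
    and W :: "real \<Rightarrow> real \<Rightarrow> real"
  assumes fin: "finite_measure \<rho>"
    and sets_rho: "sets \<rho> = sets borel"
    and on_Omega: "emeasure \<rho> (space \<rho> - Omega) = 0"
    and mass_pos: "emeasure \<rho> (space \<rho>) > 0"
    and mu_def: "\<mu> = scale_measure (1 / emeasure \<rho> (space \<rho>)) \<rho>"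
    and ac: "absolutely_continuous lborel \<mu>"
    and green: "\<And>V. subspace V \<Longrightarrow> V \<noteq> UNIV \<Longrightarrow> \<not> supported_on (green_marginal \<mu>) V"
    and red: "\<And>V. subspace V \<Longrightarrow> V \<noteq> UNIV \<Longrightarrow> \<not> supported_on (red_marginal \<mu>) V"
    and iso: "mp_borel_iso \<phi> Omega \<mu>"
    and W_def: "\<And>u v. W u v = Kern (\<phi> u) (\<phi> v)"
  shows "almost_twin_free W"
proof -
  have sets_mu: "sets \<mu> = sets borel"
    using mu_def sets_rho by simp
  from iso have meas: "\<phi> \<in> measurable Leb01 \<mu>" and pushforward: "distr Leb01 \<mu> \<phi> = \<mu>"
    unfolding mp_borel_iso_def by simp_all
  from iso obtain N N' where N: "N \<in> null_sets Leb01"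
    and bij: "bij_betw \<phi> ({0..1} - N) (Omega - N')"
    unfolding mp_borel_iso_def by blast
  have W: "W = (\<lambda>u v. Kern (\<phi> u) (\<phi> v))"
    using W_def by blast
  show ?thesis
    using almost_twin_free_if_inj_on[OF N bij_betw_imp_inj_on[OF bij]]
      twins_Kern_imp_eq[OF sets_mu meas pushforward] green red
    unfolding W by blast
qed

end
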